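(* Let $\epsilon>0$, let $\{X_\lambda\}_{\lambda\in\mathbb N}$ be a family of distributions with $X_\lambda$ over $\{0,1\}^\lambda$ and $\mathbf H_{\min}(X_\lambda)>\lambda^\epsilon$ for every $\lambda$, and let $m:\mathbb N\to\mathbb N$ be polynomially bounded. Then for every quantum adversary $\mathcal A$ making at most polynomially many (in $\lambda$) oracle queries there is a negligible function $\mu$ such that for all $\lambda$, $$\Pr[\mathsf{Distinguish}(\mathcal A,\lambda,m(\lambda),X_\lambda)=1]\le \tfrac12+\mu(\lambda).$$
   Context: The game $\mathsf{Distinguish}(\mathcal A,\lambda,m,X)$: the challenger samples a uniformly random function $H:\{0,1\}^\lambda\to\{0,1\}^m$ and a uniform bit $b$. If $b=0$ it samples $x\leftarrow X$ and sends $H(x)$ to $\mathcal A$; if $b=1$ it samples a uniform $z\in\{0,1\}^m$ and sends $z$. $\mathcal A$ additionally has quantum oracle access to $H$ via the unitary $O^H:|x\rangle|y\rangle\mapsto|x\rangle|y\oplus H(x)\rangle$, and outputs a bit $b'$. The random variable $\mathsf{Distinguish}(\mathcal A,\lambda,m,X)$ equals $1$ iff $b'=b$. A function is negligible if it is $o(1/p(\lambda))$ for every polynomial $p$. *)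

theory Defs
  imports "HOL-Probability.Probability" "HOL-Library.Landau_Symbols" "HOL-Library.FuncSet"
    "Jordan_Normal_Form.Matrix"
begin

definition negligible :: "(nat \<Rightarrow> real) \<Rightarrow> bool" where
  "negligible \<mu> \<longleftrightarrow> (\<forall>k::nat. \<mu> \<in> o(\<lambda>n. 1 / real n ^ k))"

definition poly_bounded :: "(nat \<Rightarrow> nat) \<Rightarrow> bool" where
  "poly_bounded f \<longleftrightarrow> (\<exists>c k. \<forall>n. f n \<le> c * (n + 1) ^ k)"

text \<open>Bit strings in {0,1}^n are encoded as naturals below 2^n.
  Min-entropy: H_min(X) = - log2 (max_x Pr[X = x]).\<close>
definition min_entropy :: "nat pmf \<Rightarrow> real" where
  "min_entropy X = - log 2 (Sup (pmf X ` UNIV))"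

text \<open>Hilbert space of the adversary at parameters (lam, m) with workspace dimension w:
  basis states |x>|y>|v> with x < 2^lam (query input), y < 2^m (answer register),
  v < w (workspace), encoded as the index (x * 2^m + y) * w + v.\<close>
definition qdim :: "nat \<Rightarrow> nat \<Rightarrow> nat \<Rightarrow> nat" where
  "qdim lam m w = 2 ^ lam * 2 ^ m * w"

definition oracle_idx :: "nat \<Rightarrow> nat \<Rightarrow> (nat \<Rightarrow> nat) \<Rightarrow> nat \<Rightarrow> nat" where
  "oracle_idx m w H j =
     (let x = j div (2 ^ m * w); y = (j div w) mod 2 ^ m; v = j mod w
      in (x * 2 ^ m + Bit_Operations.xor y (H x)) * w + v)"

text \<open>The unitary O^H : |x>|y>|v> \<mapsto> |x>|y xor H(x)>|v>.\<close>
definition oracle_mat :: "nat \<Rightarrow> nat \<Rightarrow> nat \<Rightarrow> (nat \<Rightarrow> nat) \<Rightarrow> complex mat" where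
  "oracle_mat lam m w H =
     mat (qdim lam m w) (qdim lam m w) (\<lambda>(i, j). if i = oracle_idx m w H j then 1 else 0)"

definition adjoint_mat :: "complex mat \<Rightarrow> complex mat" where
  "adjoint_mat A = mat (dim_col A) (dim_row A) (\<lambda>(i, j). cnj (A $$ (j, i)))"

definition unitary_mat :: "nat \<Rightarrow> complex mat \<Rightarrow> bool" where
  "unitary_mat n U \<longleftrightarrow> U \<in> carrier_mat n n \<and> adjoint_mat U * U = 1\<^sub>m n"

definition projector_mat :: "nat \<Rightarrow> complex mat \<Rightarrow> bool" where
  "projector_mat n P \<longleftrightarrow> P \<in> carrier_mat n n \<and> P * P = P \<and> adjoint_mat P = P"

definition sq_norm :: "complex vec \<Rightarrow> real" where
  "sq_norm v = (\<Sum>i<dim_vec v. (cmod (v $ i))\<^sup>2)"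

text \<open>A query-bounded quantum adversary (for one value of the security parameter):
  on classical input z it prepares the state qa_init z, then alternately applies
  unitaries qa_unit z 0, O^H, qa_unit z 1, O^H, ..., O^H, qa_unit z qa_nq
  (so exactly qa_nq oracle queries), and finally measures the projective measurement
  {qa_meas z, 1 - qa_meas z}, outputting b' = 1 on outcome qa_meas z.\<close>
record qadv =
  qa_ws   :: nat
  qa_nq   :: nat
  qa_init :: "nat \<Rightarrow> complex vec"
  qa_unit :: "nat \<Rightarrow> nat \<Rightarrow> complex mat"
  qa_meas :: "nat \<Rightarrow> complex mat"

definition wf_qadv :: "nat \<Rightarrow> nat \<Rightarrow> qadv \<Rightarrow> bool" where
  "wf_qadv lam m A \<longleftrightarrow> 0 < qa_ws A \<and>
     (\<forall>z < 2 ^ m.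
        qa_init A z \<in> carrier_vec (qdim lam m (qa_ws A)) \<and> sq_norm (qa_init A z) = 1 \<and>
        (\<forall>i \<le> qa_nq A. unitary_mat (qdim lam m (qa_ws A)) (qa_unit A z i)) \<and>
        projector_mat (qdim lam m (qa_ws A)) (qa_meas A z))"

primrec qa_state :: "qadv \<Rightarrow> nat \<Rightarrow> nat \<Rightarrow> (nat \<Rightarrow> nat) \<Rightarrow> nat \<Rightarrow> nat \<Rightarrow> complex vec" where
  "qa_state A lam m H z 0 = qa_unit A z 0 *\<^sub>v qa_init A z"
| "qa_state A lam m H z (Suc i) =
     qa_unit A z (Suc i) *\<^sub>v (oracle_mat lam m (qa_ws A) H *\<^sub>v qa_state A lam m H z i)"

definition qa_accept :: "qadv \<Rightarrow> nat \<Rightarrow> nat \<Rightarrow> (nat \<Rightarrow> nat) \<Rightarrow> nat \<Rightarrow> real" where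
  "qa_accept A lam m H z = sq_norm (qa_meas A z *\<^sub>v qa_state A lam m H z (qa_nq A))"

definition Hfuns :: "nat \<Rightarrow> nat \<Rightarrow> (nat \<Rightarrow> nat) set" where
  "Hfuns lam m = PiE {..<2 ^ lam} (\<lambda>_. {..<2 ^ m})"

text \<open>Outcome distribution of the indicator [b' = b]; the bit b = 1 is encoded as True.\<close>
definition distinguish :: "qadv \<Rightarrow> nat \<Rightarrow> nat \<Rightarrow> nat pmf \<Rightarrow> bool pmf" where
  "distinguish A lam m X = do {
     H \<leftarrow> pmf_of_set (Hfuns lam m);
     b \<leftarrow> bernoulli_pmf (1 / 2);
     c \<leftarrow> (if b then pmf_of_set {..<2 ^ m} else map_pmf H X);
     b' \<leftarrow> bernoulli_pmf (qa_accept A lam m H c);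
     return_pmf (b' = b) }"

end

theory Submission
  imports Defs "HOL-Real_Asymp.Real_Asymp"
begin

text \<open>
  The proof is the hybrid argument of Bennett, Bernstein, Brassard and Vazirani. If two oracles
  H and H' differ only at x, the final states of an adversary making q queries differ in norm by
  at most 2 (|P_x phi_0| + ... + |P_x phi_(q-1)|), where phi_k is the state before the k-th query
  and P_x projects onto the basis states querying x; hence the acceptance probabilities differ by
  at most twice that. In the game, the real challenge H(x) with x drawn from X, seen together with
  the oracle H, is distributed like a uniform challenge z seen together with the oracle H(x := z).
  So the advantage is an average over x of such differences, and by Cauchy-Schwarz
  sum_x Pr[X = x] |P_x phi_k| <= sqrt (max_x Pr[X = x]) = 2 powr (- H_min(X) / 2).
  This gives Pr[b' = b] <= 1/2 + 2 q 2 powr (- H_min(X) / 2), which is negligible for polynomial q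
  and H_min(X) > lam powr eps.
\<close>

section \<open>The Euclidean norm on complex vectors\<close>

definition vnorm :: "complex vec \<Rightarrow> real" where
  "vnorm v = sqrt (sq_norm v)"

definition vinner :: "complex vec \<Rightarrow> complex vec \<Rightarrow> complex" where
  "vinner u v = (\<Sum>i<dim_vec u. u $ i * cnj (v $ i))"

lemma vnorm_eq_L2_set: "vnorm v = L2_set (\<lambda>i. cmod (v $ i)) {..<dim_vec v}"
  by (simp add: vnorm_def sq_norm_def L2_set_def)

lemma vnorm_nonneg [simp]: "0 \<le> vnorm v"
  by (simp add: vnorm_eq_L2_set)

lemma vnorm_square: "vnorm v ^ 2 = sq_norm v"
  by (simp add: vnorm_def sq_norm_def sum_nonneg)

lemma vinner_self: "vinner v v = of_real (vnorm v ^ 2)"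
  unfolding vinner_def vnorm_square sq_norm_def of_real_sum
  by (intro sum.cong refl) (rule complex_norm_square[symmetric])

lemma vinner_Cauchy_Schwarz:
  assumes "dim_vec u = dim_vec v"
  shows "cmod (vinner u v) \<le> vnorm u * vnorm v"
proof -
  have "cmod (vinner u v) \<le> (\<Sum>i<dim_vec u. \<bar>cmod (u $ i)\<bar> * \<bar>cmod (v $ i)\<bar>)"
    unfolding vinner_def by (rule order_trans[OF norm_sum]) (simp add: norm_mult)
  also have "\<dots> \<le> vnorm u * vnorm v"
    using assms by (simp only: vnorm_eq_L2_set L2_set_mult_ineq)
  finally show ?thesis .
qed

lemma vnorm_add_le:
  assumes "dim_vec u = dim_vec v"
  shows "vnorm (u + v) \<le> vnorm u + vnorm v"
proof -
  have "vnorm (u + v) = L2_set (\<lambda>i. cmod (u $ i + v $ i)) {..<dim_vec v}"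
    unfolding vnorm_eq_L2_set using assms by (simp cong: L2_set_cong_simp)
  also have "\<dots> \<le> L2_set (\<lambda>i. cmod (u $ i) + cmod (v $ i)) {..<dim_vec v}"
    by (intro L2_set_mono) (auto intro: norm_triangle_ineq)
  also have "\<dots> \<le> vnorm u + vnorm v"
    unfolding vnorm_eq_L2_set using assms by (simp add: L2_set_triangle_ineq)
  finally show ?thesis .
qed

lemma vnorm_uminus [simp]: "vnorm (- v) = vnorm v"
  by (simp add: vnorm_eq_L2_set cong: L2_set_cong_simp)

lemma vnorm_diff_ge:
  assumes "dim_vec u = dim_vec v"
  shows "\<bar>vnorm u - vnorm v\<bar> \<le> vnorm (u - v)"
proof -
  have "u = (u - v) + v" and "v = - (u - v) + u"
    by (intro eq_vecI; simp add: assms)+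
  then have "vnorm u \<le> vnorm (u - v) + vnorm v" and "vnorm v \<le> vnorm (u - v) + vnorm u"
    using vnorm_add_le[of "u - v" v] vnorm_add_le[of "- (u - v)" u] assms by simp_all
  then show ?thesis by linarith
qed

lemma index_mult_mat_vec_sum:
  assumes "A \<in> carrier_mat n k" and "u \<in> carrier_vec k" and "i < n"
  shows "(A *\<^sub>v u) $ i = (\<Sum>j<k. A $$ (i, j) * u $ j)"
  using assms by (auto simp: scalar_prod_def atLeast0LessThan)

lemma adjoint_mat_carrier: "A \<in> carrier_mat n k \<Longrightarrow> adjoint_mat A \<in> carrier_mat k n"
  by (simp add: adjoint_mat_def)

lemma vinner_adjoint_mat:
  assumes A: "A \<in> carrier_mat n n" and u: "u \<in> carrier_vec n" and v: "v \<in> carrier_vec n"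
  shows "vinner (A *\<^sub>v u) v = vinner u (adjoint_mat A *\<^sub>v v)"
proof -
  have adj: "adjoint_mat A \<in> carrier_mat n n"
    "\<And>i j. i < n \<Longrightarrow> j < n \<Longrightarrow> adjoint_mat A $$ (j, i) = cnj (A $$ (i, j))"
    using A by (auto simp: adjoint_mat_def)
  have "vinner (A *\<^sub>v u) v = (\<Sum>i<n. \<Sum>j<n. A $$ (i, j) * u $ j * cnj (v $ i))"
    unfolding vinner_def using A
    by (intro sum.cong)
      (simp_all add: index_mult_mat_vec_sum[OF A u] sum_distrib_right del: index_mult_mat_vec)
  also have "\<dots> = (\<Sum>j<n. \<Sum>i<n. A $$ (i, j) * u $ j * cnj (v $ i))"
    by (rule sum.swap)
  also have "\<dots> = vinner u (adjoint_mat A *\<^sub>v v)"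
    unfolding vinner_def using u
    by (intro sum.cong)
      (simp_all add: index_mult_mat_vec_sum[OF adj(1) v] adj(2) sum_distrib_left mult_ac
        del: index_mult_mat_vec)
  finally show ?thesis .
qed

lemma unitary_mat_carrier: "unitary_mat n U \<Longrightarrow> U \<in> carrier_mat n n"
  by (simp add: unitary_mat_def)

lemma projector_mat_carrier: "projector_mat n P \<Longrightarrow> P \<in> carrier_mat n n"
  by (simp add: projector_mat_def)

lemma vnorm_unitary:
  assumes U: "unitary_mat n U" and v: "v \<in> carrier_vec n"
  shows "vnorm (U *\<^sub>v v) = vnorm v"
proof -
  have Uc: "U \<in> carrier_mat n n" and UU: "adjoint_mat U * U = 1\<^sub>m n"
    using U by (auto simp: unitary_mat_def)
  have "adjoint_mat U *\<^sub>v (U *\<^sub>v v) = v"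
    using Uc v by (simp add: assoc_mult_mat_vec[symmetric, of _ n n] adjoint_mat_carrier UU)
  then have "vinner (U *\<^sub>v v) (U *\<^sub>v v) = vinner v v"
    using vinner_adjoint_mat[OF Uc v] Uc v by simp
  then have "vnorm (U *\<^sub>v v) ^ 2 = vnorm v ^ 2"
    by (simp only: vinner_self of_real_eq_iff)
  then show ?thesis
    by (simp add: power2_eq_iff_nonneg)
qed

lemma vnorm_projector_le:
  assumes P: "projector_mat n P" and v: "v \<in> carrier_vec n"
  shows "vnorm (P *\<^sub>v v) \<le> vnorm v"
proof -
  have Pc: "P \<in> carrier_mat n n" and PP: "P * P = P" and Pa: "adjoint_mat P = P"
    using P by (auto simp: projector_mat_def)
  have "P *\<^sub>v (P *\<^sub>v v) = P *\<^sub>v v"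
    using Pc v by (simp add: assoc_mult_mat_vec[symmetric] PP)
  then have "vinner (P *\<^sub>v v) (P *\<^sub>v v) = vinner v (P *\<^sub>v v)"
    using vinner_adjoint_mat[OF Pc v, of "P *\<^sub>v v"] Pc v by (simp add: Pa)
  then have "vnorm (P *\<^sub>v v) ^ 2 = cmod (vinner v (P *\<^sub>v v))"
    by (metis vinner_self norm_of_real abs_of_nonneg zero_le_power2)
  also have "\<dots> \<le> vnorm v * vnorm (P *\<^sub>v v)"
    using Pc v by (intro vinner_Cauchy_Schwarz) simp
  finally have "vnorm (P *\<^sub>v v) * vnorm (P *\<^sub>v v) \<le> vnorm v * vnorm (P *\<^sub>v v)"
    by (simp add: power2_eq_square)
  then show ?thesis
    using vnorm_nonneg[of "P *\<^sub>v v"] by (cases "vnorm (P *\<^sub>v v) = 0") (auto simp: mult_le_cancel_right)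
qed

lemma L2_set_reindex_bij_betw: "bij_betw g S T \<Longrightarrow> L2_set (\<lambda>i. f (g i)) S = L2_set f T"
  unfolding L2_set_def using sum.reindex_bij_betw[of g S T "\<lambda>i. (f i)\<^sup>2"] by simp

lemma vnorm_vec_permute:
  assumes "bij_betw \<sigma> {..<n} {..<n}" and "v \<in> carrier_vec n"
  shows "vnorm (vec n (\<lambda>i. v $ \<sigma> i)) = vnorm v"
proof -
  have "vnorm (vec n (\<lambda>i. v $ \<sigma> i)) = L2_set (\<lambda>i. cmod (v $ \<sigma> i)) {..<n}"
    by (simp add: vnorm_eq_L2_set cong: L2_set_cong_simp)
  also have "\<dots> = vnorm v"
    using assms L2_set_reindex_bij_betw[OF assms(1), of "\<lambda>i. cmod (v $ i)"]
    by (simp add: vnorm_eq_L2_set)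
  finally show ?thesis .
qed

section \<open>The standard oracle\<close>

lemma xor_less_two_power:
  fixes y h :: nat
  assumes "y < 2 ^ m" and "h < 2 ^ m"
  shows "Bit_Operations.xor y h < 2 ^ m"
proof -
  have "take_bit m (Bit_Operations.xor y h) = Bit_Operations.xor y h"
    using assms by (simp add: take_bit_nat_eq_self)
  then show ?thesis
    by (metis take_bit_nat_less_exp)
qed

lemma basis_index_decompose:
  assumes "0 < w"
  obtains x y v :: nat where "j = (x * 2 ^ m + y) * w + v" and "y < 2 ^ m" and "v < w"
proof
  have "j div (2 ^ m * w) * 2 ^ m + j div w mod 2 ^ m = j div w"
    by (metis div_mult2_eq div_mult_mod_eq mult.commute)
  then show "j = (j div (2 ^ m * w) * 2 ^ m + j div w mod 2 ^ m) * w + j mod w"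
    by simp
qed (use assms in simp_all)

lemma basis_index_components:
  fixes x y v :: nat
  assumes "y < 2 ^ m" and "v < w"
  shows "((x * 2 ^ m + y) * w + v) div (2 ^ m * w) = x"
    and "((x * 2 ^ m + y) * w + v) div w mod 2 ^ m = y"
    and "((x * 2 ^ m + y) * w + v) mod w = v"
proof -
  have div_w: "((x * 2 ^ m + y) * w + v) div w = x * 2 ^ m + y"
    using assms by simp
  moreover have "j div (2 ^ m * w) = j div w div 2 ^ m" for j :: nat
    by (metis div_mult2_eq mult.commute)
  ultimately show "((x * 2 ^ m + y) * w + v) div (2 ^ m * w) = x"
    using assms by simp
  show "((x * 2 ^ m + y) * w + v) div w mod 2 ^ m = y"
    using div_w assms by simp
  show "((x * 2 ^ m + y) * w + v) mod w = v"
    using assms by simp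
qed

lemma less_qdim_iff: "0 < w \<Longrightarrow> j < qdim lam m w \<longleftrightarrow> j div (2 ^ m * w) < 2 ^ lam"
  by (simp add: qdim_def div_less_iff_less_mult mult.assoc)

lemma oracle_idx_basis_index:
  assumes "y < 2 ^ m" and "v < w"
  shows "oracle_idx m w H ((x * 2 ^ m + y) * w + v) =
    (x * 2 ^ m + Bit_Operations.xor y (H x)) * w + v"
  using basis_index_components[OF assms] by (simp add: oracle_idx_def)

lemma
  assumes w: "0 < w" and H: "H \<in> {..<2 ^ lam} \<rightarrow> {..<2 ^ m}" and j: "j < qdim lam m w"
  shows oracle_idx_less_qdim: "oracle_idx m w H j < qdim lam m w"
    and oracle_idx_involutive: "oracle_idx m w H (oracle_idx m w H j) = j"
    and oracle_idx_div: "oracle_idx m w H j div (2 ^ m * w) = j div (2 ^ m * w)"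
proof -
  obtain x y v where j_eq: "j = (x * 2 ^ m + y) * w + v" and y: "y < 2 ^ m" and v: "v < w"
    using basis_index_decompose[OF w] .
  have x: "x < 2 ^ lam"
    using j less_qdim_iff[OF w] basis_index_components[OF y v] by (simp add: j_eq)
  have xor: "Bit_Operations.xor y (H x) < 2 ^ m"
    using xor_less_two_power[OF y] H x by auto
  show "oracle_idx m w H j < qdim lam m w"
    using x xor v
    by (simp add: j_eq oracle_idx_basis_index[OF y v] less_qdim_iff[OF w] basis_index_components)
  show "oracle_idx m w H (oracle_idx m w H j) = j"
    using x xor v
    by (simp add: j_eq oracle_idx_basis_index[OF y v] oracle_idx_basis_index basis_index_components
        xor.assoc)
  show "oracle_idx m w H j div (2 ^ m * w) = j div (2 ^ m * w)"
    using xor v by (simp add: j_eq oracle_idx_basis_index[OF y v] basis_index_components y)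
qed

definition query_block :: "nat \<Rightarrow> nat \<Rightarrow> nat \<Rightarrow> nat \<Rightarrow> nat set" where
  "query_block lam m w x = {j. j < qdim lam m w \<and> j div (2 ^ m * w) = x}"

text \<open>The norm of the part of u whose query register holds x, i.e. |P_x u| in the notation above.\<close>

definition query_norm :: "nat \<Rightarrow> nat \<Rightarrow> nat \<Rightarrow> complex vec \<Rightarrow> nat \<Rightarrow> real" where
  "query_norm lam m w u x = L2_set (\<lambda>j. cmod (u $ j)) (query_block lam m w x)"

lemma
  assumes "0 < w" and "H \<in> {..<2 ^ lam} \<rightarrow> {..<2 ^ m}"
  shows bij_betw_oracle_idx: "bij_betw (oracle_idx m w H) {..<qdim lam m w} {..<qdim lam m w}"
    and bij_betw_oracle_idx_query_block:
      "bij_betw (oracle_idx m w H) (query_block lam m w x) (query_block lam m w x)"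
  unfolding query_block_def
  by (rule bij_betw_byWitness[where f' = "oracle_idx m w H"];
      use oracle_idx_less_qdim oracle_idx_involutive oracle_idx_div assms in auto)+

lemma oracle_mat_carrier [simp]: "oracle_mat lam m w H \<in> carrier_mat (qdim lam m w) (qdim lam m w)"
  by (simp add: oracle_mat_def)

lemma oracle_mat_mult_vec:
  assumes w: "0 < w" and H: "H \<in> {..<2 ^ lam} \<rightarrow> {..<2 ^ m}"
    and u: "u \<in> carrier_vec (qdim lam m w)"
  shows "oracle_mat lam m w H *\<^sub>v u = vec (qdim lam m w) (\<lambda>i. u $ oracle_idx m w H i)"
proof (rule eq_vecI)
  let ?n = "qdim lam m w" and ?\<sigma> = "oracle_idx m w H"
  fix i assume i: "i < dim_vec (vec ?n (\<lambda>i. u $ ?\<sigma> i))"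
  then have i: "i < ?n" by simp
  have "(oracle_mat lam m w H *\<^sub>v u) $ i = (\<Sum>j<?n. if j = ?\<sigma> i then u $ j else 0)"
  proof (subst index_mult_mat_vec_sum[OF _ u i], simp add: oracle_mat_def, intro sum.cong refl)
    fix j assume "j \<in> {..<?n}"
    then have "i = ?\<sigma> j \<longleftrightarrow> j = ?\<sigma> i"
      using i oracle_idx_involutive[OF w H] by auto
    then show "oracle_mat lam m w H $$ (i, j) * u $ j = (if j = ?\<sigma> i then u $ j else 0)"
      using i \<open>j \<in> {..<?n}\<close> by (simp add: oracle_mat_def)
  qed
  also have "\<dots> = u $ ?\<sigma> i"
    using oracle_idx_less_qdim[OF w H i] by simp
  finally show "(oracle_mat lam m w H *\<^sub>v u) $ i = vec ?n (\<lambda>i. u $ ?\<sigma> i) $ i"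
    using i by simp
qed (simp add: oracle_mat_def)

lemma vnorm_oracle_mat:
  assumes "0 < w" and "H \<in> {..<2 ^ lam} \<rightarrow> {..<2 ^ m}" and "u \<in> carrier_vec (qdim lam m w)"
  shows "vnorm (oracle_mat lam m w H *\<^sub>v u) = vnorm u"
  using assms by (simp add: oracle_mat_mult_vec vnorm_vec_permute bij_betw_oracle_idx)

lemma vnorm_oracle_mat_diff:
  assumes w: "0 < w"
    and H: "H \<in> {..<2 ^ lam} \<rightarrow> {..<2 ^ m}" and H': "H' \<in> {..<2 ^ lam} \<rightarrow> {..<2 ^ m}"
    and agree: "\<And>x. x \<noteq> x0 \<Longrightarrow> H x = H' x" and u: "u \<in> carrier_vec (qdim lam m w)"
  shows "vnorm (oracle_mat lam m w H *\<^sub>v u - oracle_mat lam m w H' *\<^sub>v u)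
    \<le> 2 * query_norm lam m w u x0"
proof -
  let ?n = "qdim lam m w" and ?B = "query_block lam m w x0"
  let ?\<sigma> = "oracle_idx m w H" and ?\<sigma>' = "oracle_idx m w H'"
  let ?d = "\<lambda>i. cmod (u $ ?\<sigma> i - u $ ?\<sigma>' i)"
  have outside: "?d i = 0" if "i \<in> {..<?n} - ?B" for i
    using that agree by (simp add: query_block_def oracle_idx_def Let_def)
  have "vnorm (oracle_mat lam m w H *\<^sub>v u - oracle_mat lam m w H' *\<^sub>v u) = L2_set ?d {..<?n}"
    by (simp add: oracle_mat_mult_vec[OF w H u] oracle_mat_mult_vec[OF w H' u] vnorm_eq_L2_set
        cong: L2_set_cong_simp)
  also have "\<dots> = L2_set ?d ?B"
    unfolding L2_set_def using outside
    by (intro arg_cong[where f = sqrt] sum.mono_neutral_right) (auto simp: query_block_def)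
  also have "\<dots> \<le> L2_set (\<lambda>i. cmod (u $ ?\<sigma> i) + cmod (u $ ?\<sigma>' i)) ?B"
    by (intro L2_set_mono) (auto intro: norm_triangle_ineq4)
  also have "\<dots> \<le> L2_set (\<lambda>i. cmod (u $ ?\<sigma> i)) ?B + L2_set (\<lambda>i. cmod (u $ ?\<sigma>' i)) ?B"
    by (rule L2_set_triangle_ineq)
  also have "\<dots> = 2 * query_norm lam m w u x0"
    unfolding query_norm_def
    using L2_set_reindex_bij_betw[OF bij_betw_oracle_idx_query_block[OF w H], of "\<lambda>j. cmod (u $ j)"]
      L2_set_reindex_bij_betw[OF bij_betw_oracle_idx_query_block[OF w H'], of "\<lambda>j. cmod (u $ j)"]
    by simp
  finally show ?thesis .
qed

lemma L2_set_query_norm: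
  assumes "u \<in> carrier_vec (qdim lam m w)"
  shows "L2_set (query_norm lam m w u) {..<2 ^ lam} = vnorm u"
proof -
  have "(\<Sum>x<2 ^ lam. (query_norm lam m w u x)\<^sup>2) =
      (\<Sum>x<2 ^ lam. \<Sum>j\<in>{j \<in> {..<qdim lam m w}. j div (2 ^ m * w) = x}. (cmod (u $ j))\<^sup>2)"
    unfolding query_norm_def L2_set_def query_block_def
    by (intro sum.cong refl) (simp add: sum_nonneg)
  also have "\<dots> = (\<Sum>j<qdim lam m w. (cmod (u $ j))\<^sup>2)"
    by (rule sum.group) (auto simp: qdim_def less_mult_imp_div_less mult.assoc)
  finally show ?thesis
    using assms by (simp add: L2_set_def vnorm_def sq_norm_def)
qed

section \<open>Query-bounded adversaries\<close>

lemma wf_qadvD: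
  assumes "wf_qadv lam m A" and "z < 2 ^ m"
  shows "0 < qa_ws A"
    and "qa_init A z \<in> carrier_vec (qdim lam m (qa_ws A))"
    and "sq_norm (qa_init A z) = 1"
    and "i \<le> qa_nq A \<Longrightarrow> unitary_mat (qdim lam m (qa_ws A)) (qa_unit A z i)"
    and "projector_mat (qdim lam m (qa_ws A)) (qa_meas A z)"
  using assms by (auto simp: wf_qadv_def)

lemma qa_state_carrier:
  assumes "wf_qadv lam m A" and "z < 2 ^ m" and "i \<le> qa_nq A"
  shows "qa_state A lam m H z i \<in> carrier_vec (qdim lam m (qa_ws A))"
  using assms(3)
  by (induction i)
    (use wf_qadvD[OF assms(1,2)] unitary_mat_carrier in \<open>auto intro!: mult_mat_vec_carrier\<close>)

lemma vnorm_qa_state: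
  assumes wf: "wf_qadv lam m A" and z: "z < 2 ^ m" and H: "H \<in> {..<2 ^ lam} \<rightarrow> {..<2 ^ m}"
    and "i \<le> qa_nq A"
  shows "vnorm (qa_state A lam m H z i) = 1"
  using assms(4)
proof (induction i)
  case 0
  then show ?case
    using vnorm_unitary[OF wf_qadvD(4)[OF wf z] wf_qadvD(2)[OF wf z]] wf_qadvD(3)[OF wf z]
    by (simp add: vnorm_def)
next
  case (Suc i)
  let ?p = "qa_state A lam m H z i"
  have p: "?p \<in> carrier_vec (qdim lam m (qa_ws A))"
    using qa_state_carrier[OF wf z] Suc.prems by simp
  have "vnorm (qa_state A lam m H z (Suc i)) = vnorm (oracle_mat lam m (qa_ws A) H *\<^sub>v ?p)"
    using vnorm_unitary[OF wf_qadvD(4)[OF wf z Suc.prems]] mult_mat_vec_carrier[OF oracle_mat_carrier p]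
    by simp
  also have "\<dots> = vnorm ?p"
    by (rule vnorm_oracle_mat[OF wf_qadvD(1)[OF wf z] H p])
  finally show ?case
    using Suc by simp
qed

lemma vnorm_qa_state_diff:
  assumes wf: "wf_qadv lam m A" and z: "z < 2 ^ m"
    and H: "H \<in> {..<2 ^ lam} \<rightarrow> {..<2 ^ m}" and H': "H' \<in> {..<2 ^ lam} \<rightarrow> {..<2 ^ m}"
    and agree: "\<And>x. x \<noteq> x0 \<Longrightarrow> H x = H' x" and "i \<le> qa_nq A"
  shows "vnorm (qa_state A lam m H z i - qa_state A lam m H' z i)
    \<le> 2 * (\<Sum>k<i. query_norm lam m (qa_ws A) (qa_state A lam m H z k) x0)"
  using assms(6)
proof (induction i)
  case 0
  have "vnorm (v - v) = 0" for v
    by (simp add: vnorm_eq_L2_set L2_set_def cong: L2_set_cong_simp)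
  then show ?case
    by simp
next
  case (Suc i)
  let ?n = "qdim lam m (qa_ws A)" and ?w = "qa_ws A"
  let ?O = "oracle_mat lam m ?w H" and ?O' = "oracle_mat lam m ?w H'"
  let ?p = "qa_state A lam m H z i" and ?p' = "qa_state A lam m H' z i"
  have w: "0 < ?w"
    using wf_qadvD(1)[OF wf z] .
  have p: "?p \<in> carrier_vec ?n" and p': "?p' \<in> carrier_vec ?n"
    using qa_state_carrier[OF wf z] Suc.prems by simp_all
  have U: "unitary_mat ?n (qa_unit A z (Suc i))"
    using wf_qadvD(4)[OF wf z Suc.prems] .
  have split: "?O *\<^sub>v ?p - ?O' *\<^sub>v ?p' = (?O *\<^sub>v ?p - ?O' *\<^sub>v ?p) + ?O' *\<^sub>v (?p - ?p')"
    using p p' by (intro eq_vecI) (simp_all add: mult_minus_distrib_mat_vec[of _ ?n ?n])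
  have "vnorm (qa_state A lam m H z (Suc i) - qa_state A lam m H' z (Suc i))
      = vnorm (qa_unit A z (Suc i) *\<^sub>v (?O *\<^sub>v ?p - ?O' *\<^sub>v ?p'))"
    using mult_minus_distrib_mat_vec[OF unitary_mat_carrier[OF U],
        OF mult_mat_vec_carrier[OF oracle_mat_carrier p] mult_mat_vec_carrier[OF oracle_mat_carrier p']]
    by simp
  also have "\<dots> = vnorm (?O *\<^sub>v ?p - ?O' *\<^sub>v ?p')"
    using p p'
    by (intro vnorm_unitary[OF U] minus_carrier_vec mult_mat_vec_carrier[OF oracle_mat_carrier])
  also have "\<dots> = vnorm ((?O *\<^sub>v ?p - ?O' *\<^sub>v ?p) + ?O' *\<^sub>v (?p - ?p'))"
    by (simp only: split)
  also have "\<dots> \<le> vnorm (?O *\<^sub>v ?p - ?O' *\<^sub>v ?p) + vnorm (?O' *\<^sub>v (?p - ?p'))"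
    using p p' by (intro vnorm_add_le) simp
  also have "vnorm (?O' *\<^sub>v (?p - ?p')) = vnorm (?p - ?p')"
    using p p' by (simp add: vnorm_oracle_mat[OF w H'])
  also have "vnorm (?O *\<^sub>v ?p - ?O' *\<^sub>v ?p) \<le> 2 * query_norm lam m ?w ?p x0"
    by (rule vnorm_oracle_mat_diff[OF w H H' agree p])
  finally show ?case
    using Suc by simp
qed

lemma qa_accept_eq_vnorm:
  "qa_accept A lam m H z = vnorm (qa_meas A z *\<^sub>v qa_state A lam m H z (qa_nq A)) ^ 2"
  by (simp add: qa_accept_def vnorm_square)

lemma qa_accept_nonneg: "0 \<le> qa_accept A lam m H z"
  by (simp add: qa_accept_eq_vnorm)

lemma qa_accept_le_1:
  assumes wf: "wf_qadv lam m A" and z: "z < 2 ^ m" and H: "H \<in> {..<2 ^ lam} \<rightarrow> {..<2 ^ m}"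
  shows "qa_accept A lam m H z \<le> 1"
proof -
  have "vnorm (qa_meas A z *\<^sub>v qa_state A lam m H z (qa_nq A)) \<le> 1"
    using vnorm_projector_le[OF wf_qadvD(5)[OF wf z] qa_state_carrier[OF wf z le_refl, of H]]
      vnorm_qa_state[OF wf z H le_refl] by simp
  then show ?thesis
    by (simp add: qa_accept_eq_vnorm power_le_one)
qed

lemma qa_accept_diff_le:
  assumes wf: "wf_qadv lam m A" and z: "z < 2 ^ m"
    and H: "H \<in> {..<2 ^ lam} \<rightarrow> {..<2 ^ m}" and H': "H' \<in> {..<2 ^ lam} \<rightarrow> {..<2 ^ m}"
    and agree: "\<And>x. x \<noteq> x0 \<Longrightarrow> H x = H' x"
  shows "\<bar>qa_accept A lam m H z - qa_accept A lam m H' z\<bar>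
    \<le> 4 * (\<Sum>k<qa_nq A. query_norm lam m (qa_ws A) (qa_state A lam m H z k) x0)"
proof -
  let ?n = "qdim lam m (qa_ws A)" and ?M = "qa_meas A z"
  let ?p = "qa_state A lam m H z (qa_nq A)" and ?p' = "qa_state A lam m H' z (qa_nq A)"
  let ?S = "\<Sum>k<qa_nq A. query_norm lam m (qa_ws A) (qa_state A lam m H z k) x0"
  define a where "a = vnorm (?M *\<^sub>v ?p)"
  define b where "b = vnorm (?M *\<^sub>v ?p')"
  have P: "projector_mat ?n ?M"
    using wf_qadvD(5)[OF wf z] .
  have p: "?p \<in> carrier_vec ?n" and p': "?p' \<in> carrier_vec ?n"
    using qa_state_carrier[OF wf z le_refl] by simp_all
  have "a \<le> 1" "b \<le> 1"
    using vnorm_projector_le[OF P p] vnorm_projector_le[OF P p']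
      vnorm_qa_state[OF wf z H le_refl] vnorm_qa_state[OF wf z H' le_refl]
    by (simp_all add: a_def b_def)
  moreover have "0 \<le> a" "0 \<le> b"
    by (simp_all add: a_def b_def)
  moreover have "\<bar>a - b\<bar> \<le> 2 * ?S"
  proof -
    have "\<bar>a - b\<bar> \<le> vnorm (?M *\<^sub>v ?p - ?M *\<^sub>v ?p')"
      unfolding a_def b_def using projector_mat_carrier[OF P] by (intro vnorm_diff_ge) simp
    also have "\<dots> = vnorm (?M *\<^sub>v (?p - ?p'))"
      using projector_mat_carrier[OF P] p p' by (simp add: mult_minus_distrib_mat_vec)
    also have "\<dots> \<le> vnorm (?p - ?p')"
      using p p' by (intro vnorm_projector_le[OF P]) simp
    also have "\<dots> \<le> 2 * ?S"
      by (rule vnorm_qa_state_diff[OF wf z H H' agree le_refl])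
    finally show ?thesis .
  qed
  ultimately have "\<bar>a - b\<bar> * (a + b) \<le> (2 * ?S) * 2"
    by (intro mult_mono) auto
  moreover have "\<bar>a\<^sup>2 - b\<^sup>2\<bar> = \<bar>a - b\<bar> * (a + b)"
    using \<open>0 \<le> a\<close> \<open>0 \<le> b\<close>
    by (simp add: power2_eq_square square_diff_square_factored abs_mult mult.commute)
  ultimately show ?thesis
    by (simp add: qa_accept_eq_vnorm a_def b_def)
qed

section \<open>The distinguishing game\<close>

lemma finite_Hfuns: "finite (Hfuns lam m)"
  by (simp add: Hfuns_def finite_PiE)

lemma Hfuns_nonempty: "Hfuns lam m \<noteq> {}"
  by (simp add: Hfuns_def PiE_eq_empty_iff lessThan_empty_iff)

lemma Hfuns_subset_Pi: "H \<in> Hfuns lam m \<Longrightarrow> H \<in> {..<2 ^ lam} \<rightarrow> {..<2 ^ m}"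
  by (simp add: Hfuns_def PiE_iff)

lemma fun_upd_in_Hfuns:
  "H \<in> Hfuns lam m \<Longrightarrow> x < 2 ^ lam \<Longrightarrow> y < 2 ^ m \<Longrightarrow> H(x := y) \<in> Hfuns lam m"
  by (simp add: Hfuns_def PiE_iff extensional_def)

lemma sum_Hfuns_resample:
  fixes g :: "(nat \<Rightarrow> nat) \<Rightarrow> nat \<Rightarrow> real"
  assumes x: "x < 2 ^ lam"
  shows "(\<Sum>H\<in>Hfuns lam m. \<Sum>y<2 ^ m. g (H(x := y)) y)
    = 2 ^ m * (\<Sum>H\<in>Hfuns lam m. g H (H x))"
proof -
  let ?F = "Hfuns lam m"
  have fibre: "(\<Sum>H\<in>?F. g (H(x := y)) y) = 2 ^ m * (\<Sum>H\<in>{H\<in>?F. H x = y}. g H y)"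
    if y: "y < 2 ^ m" for y
  proof -
    have "bij_betw (\<lambda>(H, u). H(x := u)) ({H\<in>?F. H x = y} \<times> {..<2 ^ m}) ?F"
      by (rule bij_betw_byWitness[where f' = "\<lambda>H. (H(x := y), H x)"])
        (use fun_upd_in_Hfuns Hfuns_subset_Pi[THEN funcset_mem] x y in auto)
    then have "(\<Sum>H\<in>?F. g (H(x := y)) y)
        = (\<Sum>(H, u)\<in>{H\<in>?F. H x = y} \<times> {..<(2::nat) ^ m}. g (H(x := u, x := y)) y)"
      by (simp add: sum.reindex_bij_betw[symmetric] case_prod_beta)
    also have "\<dots> = (\<Sum>(H, u)\<in>{H\<in>?F. H x = y} \<times> {..<(2::nat) ^ m}. g H y)"
      by (intro sum.cong) auto
    also have "\<dots> = (\<Sum>H\<in>{H\<in>?F. H x = y}. \<Sum>u<(2::nat) ^ m. g H y)"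
      by (rule sum.cartesian_product[symmetric])
    finally show ?thesis
      by (simp add: sum_distrib_left)
  qed
  have "(\<Sum>H\<in>?F. \<Sum>y<2 ^ m. g (H(x := y)) y)
      = (\<Sum>y<2 ^ m. 2 ^ m * (\<Sum>H\<in>{H\<in>?F. H x = y}. g H (H x)))"
    by (subst sum.swap) (intro sum.cong refl; simp add: fibre)
  also have "\<dots> = 2 ^ m * (\<Sum>H\<in>?F. g H (H x))"
    unfolding sum_distrib_left[symmetric]
    by (subst sum.group[symmetric, where h = "\<lambda>H. g H (H x)" and g = "\<lambda>H. H x"
          and T = "{..<2 ^ m}"])
      (use finite_Hfuns Hfuns_subset_Pi[THEN funcset_mem] x in auto)
  finally show ?thesis .
qed

lemma pmf_bernoulli_guess:
  "0 \<le> a \<Longrightarrow> a \<le> 1 \<Longrightarrow>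
    pmf (bernoulli_pmf a \<bind> (\<lambda>b'. return_pmf (b' = b))) True = (if b then a else 1 - a)"
  by (cases b) (simp_all add: pmf_bind measure_pmf_single)

lemma pmf_distinguish_True:
  assumes wf: "wf_qadv lam m A" and X: "set_pmf X \<subseteq> {..<2 ^ lam}"
  shows "pmf (distinguish A lam m X) True = 1 / 2 +
    (\<Sum>H\<in>Hfuns lam m. (\<Sum>z<2 ^ m. qa_accept A lam m H z) / 2 ^ m
       - (\<Sum>x<2 ^ lam. pmf X x * qa_accept A lam m H (H x))) / (2 * card (Hfuns lam m))"
proof -
  let ?F = "Hfuns lam m" and ?acc = "qa_accept A lam m"
  let ?guess = "\<lambda>H b c. bernoulli_pmf (?acc H c) \<bind> (\<lambda>b'. return_pmf (b' = b))"
  let ?round = "\<lambda>H b. (if b then pmf_of_set {..<2 ^ m} else map_pmf H X) \<bind> ?guess H b"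
  define acc_uniform where "acc_uniform H = (\<Sum>z<2 ^ m. ?acc H z) / 2 ^ m" for H
  define acc_real where "acc_real H = (\<Sum>x<2 ^ lam. pmf X x * ?acc H (H x))" for H
  have guess: "pmf (?guess H b c) True = (if b then ?acc H c else 1 - ?acc H c)"
    if "H \<in> ?F" "c < 2 ^ m" for H b c
    using qa_accept_nonneg qa_accept_le_1[OF wf that(2) Hfuns_subset_Pi[OF that(1)]]
    by (intro pmf_bernoulli_guess)
  have round:
    "pmf (bernoulli_pmf (1 / 2) \<bind> ?round H) True = 1 / 2 + (acc_uniform H - acc_real H) / 2"
    if H: "H \<in> ?F" for H
  proof -
    have H_less: "H x < 2 ^ m" if "x < 2 ^ lam" for x
      using Hfuns_subset_Pi[OF H] that by auto
    have "pmf (?round H True) True = (\<Sum>z<2 ^ m. pmf (?guess H True z) True) / 2 ^ m"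
      by (simp add: pmf_bind_pmf_of_set lessThan_empty_iff)
    also have "\<dots> = acc_uniform H"
      unfolding acc_uniform_def using guess[OF H, of _ True]
      by (intro arg_cong2[where f = "(/)"] sum.cong refl) simp_all
    finally have round_True: "pmf (?round H True) True = acc_uniform H" .
    have "pmf (?round H False) True = (\<integral>x. pmf (?guess H False (H x)) True \<partial>X)"
      by (simp only: if_False pmf_bind integral_map_pmf)
    also have "\<dots> = (\<Sum>x<2 ^ lam. pmf (?guess H False (H x)) True * pmf X x)"
      by (rule integral_measure_pmf_real) (use X in auto)
    also have "\<dots> = (\<Sum>x<2 ^ lam. pmf X x - pmf X x * ?acc H (H x))"
      by (intro sum.cong refl) (subst guess[OF H], auto simp: H_less algebra_simps)
    also have "\<dots> = 1 - acc_real H"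
      using X sum_pmf_eq_1[of "{..<2 ^ lam}" X] by (simp add: acc_real_def sum_subtractf)
    finally have round_False: "pmf (?round H False) True = 1 - acc_real H" .
    have "pmf (bernoulli_pmf (1 / 2) \<bind> ?round H) True
        = pmf (?round H True) True * (1 / 2) + pmf (?round H False) True * (1 - 1 / 2)"
      by (simp only: pmf_bind) (rule integral_bernoulli_pmf; simp)
    then show ?thesis
      unfolding round_True round_False by (simp add: field_simps)
  qed
  have "pmf (distinguish A lam m X) True
      = (\<Sum>H\<in>?F. pmf (bernoulli_pmf (1 / 2) \<bind> ?round H) True) / card ?F"
    unfolding distinguish_def by (rule pmf_bind_pmf_of_set[OF Hfuns_nonempty finite_Hfuns])
  also have "\<dots> = (\<Sum>H\<in>?F. 1 / 2 + (acc_uniform H - acc_real H) / 2) / card ?F"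
    by (simp add: round cong: sum.cong)
  also have "\<dots> = (card ?F / 2 + (\<Sum>H\<in>?F. acc_uniform H - acc_real H) / 2) / card ?F"
    by (simp add: sum.distrib sum_divide_distrib)
  also have "\<dots> = 1 / 2 + (\<Sum>H\<in>?F. acc_uniform H - acc_real H) / (2 * card ?F)"
    using finite_Hfuns Hfuns_nonempty by (simp add: field_simps)
  finally show ?thesis
    unfolding acc_uniform_def acc_real_def .
qed

lemma sum_mult_le_sqrt_max_L2_set:
  fixes p a :: "'a \<Rightarrow> real"
  assumes p_nonneg: "\<And>x. x \<in> S \<Longrightarrow> 0 \<le> p x" and p_le: "\<And>x. x \<in> S \<Longrightarrow> p x \<le> s"
    and p_sum: "sum p S = 1"
  shows "(\<Sum>x\<in>S. p x * a x) \<le> sqrt s * L2_set a S"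
proof -
  have "(\<Sum>x\<in>S. p x * a x) \<le> (\<Sum>x\<in>S. \<bar>p x\<bar> * \<bar>a x\<bar>)"
    by (intro sum_mono) (simp flip: abs_mult)
  also have "\<dots> \<le> L2_set p S * L2_set a S"
    by (rule L2_set_mult_ineq)
  also have "L2_set p S \<le> sqrt s"
  proof -
    have "(\<Sum>x\<in>S. (p x)\<^sup>2) \<le> (\<Sum>x\<in>S. s * p x)"
      using p_nonneg p_le by (intro sum_mono) (simp add: power2_eq_square mult_right_mono)
    then show ?thesis
      by (simp add: L2_set_def p_sum flip: sum_distrib_left)
  qed
  finally show ?thesis
    by (simp add: mult_right_mono)
qed

lemma expected_query_norm_le:
  assumes X: "set_pmf X \<subseteq> {..<2 ^ lam}" and X_le: "\<And>x. pmf X x \<le> s"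
    and u: "u \<in> carrier_vec (qdim lam m w)" and u_unit: "vnorm u = 1"
  shows "(\<Sum>x<2 ^ lam. pmf X x * query_norm lam m w u x) \<le> sqrt s"
  using sum_mult_le_sqrt_max_L2_set[of "{..<2 ^ lam}" "pmf X" s "query_norm lam m w u"]
    sum_pmf_eq_1[of "{..<2 ^ lam}" X] X X_le L2_set_query_norm[OF u] u_unit
  by auto

lemma expected_qa_accept_change_le:
  assumes wf: "wf_qadv lam m A" and z: "z < 2 ^ m" and H: "H \<in> {..<2 ^ lam} \<rightarrow> {..<2 ^ m}"
    and X: "set_pmf X \<subseteq> {..<2 ^ lam}" and X_le: "\<And>x. pmf X x \<le> s" and y: "y < 2 ^ m"
  shows "(\<Sum>x<2 ^ lam. pmf X x * (qa_accept A lam m H z - qa_accept A lam m (H(x := y)) z))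
    \<le> 4 * qa_nq A * sqrt s"
proof -
  let ?q = "qa_nq A" and ?qn = "\<lambda>k. query_norm lam m (qa_ws A) (qa_state A lam m H z k)"
  have "(\<Sum>x<2 ^ lam. pmf X x * (qa_accept A lam m H z - qa_accept A lam m (H(x := y)) z))
      \<le> (\<Sum>x<2 ^ lam. pmf X x * (4 * (\<Sum>k<?q. ?qn k x)))"
  proof (intro sum_mono mult_left_mono)
    fix x
    have "H(x := y) \<in> {..<2 ^ lam} \<rightarrow> {..<2 ^ m}"
      using H y by auto
    then show "qa_accept A lam m H z - qa_accept A lam m (H(x := y)) z \<le> 4 * (\<Sum>k<?q. ?qn k x)"
      using qa_accept_diff_le[OF wf z H, of "H(x := y)" x] by simp
  qed simp
  also have "\<dots> = 4 * (\<Sum>k<?q. \<Sum>x<2 ^ lam. pmf X x * ?qn k x)"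
    by (simp add: sum_distrib_left mult_ac sum.swap[of _ "{..<2 ^ lam}"])
  also have "\<dots> \<le> 4 * (\<Sum>k<?q. sqrt s)"
    using qa_state_carrier[OF wf z] vnorm_qa_state[OF wf z H]
    by (intro mult_left_mono sum_mono expected_query_norm_le[OF X X_le]) auto
  finally show ?thesis
    by simp
qed

lemma pmf_distinguish_le:
  assumes wf: "wf_qadv lam m A"
    and X: "set_pmf X \<subseteq> {..<2 ^ lam}" and X_le: "\<And>x. pmf X x \<le> s"
  shows "pmf (distinguish A lam m X) True \<le> 1 / 2 + 2 * qa_nq A * sqrt s"
proof -
  let ?F = "Hfuns lam m" and ?acc = "qa_accept A lam m" and ?M = "(2::real) ^ m"
  let ?bound = "4 * qa_nq A * sqrt s"
  have X_sum: "(\<Sum>x<2 ^ lam. pmf X x) = 1"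
    using X by (intro sum_pmf_eq_1) auto
  have uniform: "(\<Sum>H\<in>?F. (\<Sum>z<2 ^ m. ?acc H z) / ?M)
      = (\<Sum>H\<in>?F. \<Sum>z<2 ^ m. \<Sum>x<2 ^ lam. pmf X x * ?acc H z) / ?M"
    by (simp add: sum_divide_distrib X_sum flip: sum_distrib_right)
  txt \<open>Resampling the oracle at the challenge point x turns the real challenge into a uniform one.\<close>
  have real: "(\<Sum>H\<in>?F. \<Sum>x<2 ^ lam. pmf X x * ?acc H (H x))
      = (\<Sum>H\<in>?F. \<Sum>z<2 ^ m. \<Sum>x<2 ^ lam. pmf X x * ?acc (H(x := z)) z) / ?M"
  proof -
    have "(\<Sum>H\<in>?F. \<Sum>x<2 ^ lam. pmf X x * ?acc H (H x))
        = (\<Sum>x<2 ^ lam. pmf X x * (\<Sum>H\<in>?F. ?acc H (H x)))"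
      by (simp add: sum_distrib_left sum.swap[of _ ?F])
    also have "\<dots> = (\<Sum>x<2 ^ lam. pmf X x * (\<Sum>H\<in>?F. \<Sum>z<2 ^ m. ?acc (H(x := z)) z) / ?M)"
      by (intro sum.cong refl) (simp add: sum_Hfuns_resample)
    also have "\<dots> = (\<Sum>H\<in>?F. \<Sum>z<2 ^ m. \<Sum>x<2 ^ lam. pmf X x * ?acc (H(x := z)) z) / ?M"
      by (simp add: sum_distrib_left sum_divide_distrib sum.swap[of _ "{..<2 ^ lam}"])
    finally show ?thesis .
  qed
  have "(\<Sum>H\<in>?F. (\<Sum>z<2 ^ m. ?acc H z) / ?M - (\<Sum>x<2 ^ lam. pmf X x * ?acc H (H x)))
      = (\<Sum>H\<in>?F. \<Sum>z<2 ^ m. \<Sum>x<2 ^ lam. pmf X x * (?acc H z - ?acc (H(x := z)) z)) / ?M"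
    by (simp add: sum_subtractf uniform real right_diff_distrib diff_divide_distrib)
  also have "\<dots> \<le> (\<Sum>H\<in>?F. \<Sum>z<(2::nat) ^ m. ?bound) / ?M"
    using Hfuns_subset_Pi
    by (intro divide_right_mono sum_mono expected_qa_accept_change_le[OF wf _ _ X X_le]) auto
  also have "\<dots> = card ?F * ?bound"
    by simp
  finally show ?thesis
    using finite_Hfuns Hfuns_nonempty
    by (simp add: pmf_distinguish_True[OF wf X] divide_le_eq field_simps)
qed

section \<open>Negligibility of the bound\<close>

lemma pmf_le_min_entropy: "pmf X x \<le> 2 powr - min_entropy X"
proof -
  let ?max = "Sup (range (pmf X))"
  have bdd: "bdd_above (range (pmf X))"
    by (auto intro: bdd_aboveI pmf_le_1)
  obtain x0 where "x0 \<in> set_pmf X"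
    using set_pmf_not_empty[of X] by blast
  then have "0 < ?max"
    using cSup_upper[OF _ bdd, of "pmf X x0"] pmf_positive by fastforce
  then have "2 powr - min_entropy X = ?max"
    by (simp add: min_entropy_def)
  then show ?thesis
    using cSup_upper[OF _ bdd] by simp
qed

lemma negligible_query_bound:
  fixes q :: "nat \<Rightarrow> nat" and h :: "nat \<Rightarrow> real"
  assumes \<epsilon>: "0 < \<epsilon>" and q: "poly_bounded q" and h: "\<forall>\<^sub>F n in sequentially. real n powr \<epsilon> < h n"
  shows "negligible (\<lambda>n. 2 * q n * sqrt (2 powr - h n))"
  unfolding negligible_def
proof
  fix k :: nat
  obtain c d where c: "\<And>n. q n \<le> c * (n + 1) ^ d"
    using q unfolding poly_bounded_def by blast
  define f where "f n = (real n + 1) ^ d * 2 powr (- (real n powr \<epsilon>) / 2)" for n :: nat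
  have "\<forall>\<^sub>F n in sequentially. norm (2 * q n * sqrt (2 powr - h n)) \<le> (2 * c) * norm (f n)"
    using h
  proof eventually_elim
    case (elim n)
    have "sqrt (2 powr - h n) = 2 powr (- h n / 2)"
      using powr_half_sqrt_powr[of 2 "- h n"] by simp
    also have "\<dots> \<le> 2 powr (- (real n powr \<epsilon>) / 2)"
      using elim by simp
    finally have "sqrt (2 powr - h n) \<le> 2 powr (- (real n powr \<epsilon>) / 2)" .
    moreover have "real (q n) \<le> c * (real n + 1) ^ d"
      using c[of n] by (metis of_nat_1 of_nat_add of_nat_le_iff of_nat_mult of_nat_power)
    ultimately have
      "q n * sqrt (2 powr - h n) \<le> (c * (real n + 1) ^ d) * 2 powr (- (real n powr \<epsilon>) / 2)"
      by (intro mult_mono) auto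
    then show ?case
      unfolding f_def by (simp add: mult_ac)
  qed
  then have "(\<lambda>n. 2 * q n * sqrt (2 powr - h n)) \<in> O(f)"
    by (rule bigoI)
  moreover have "f \<in> o(\<lambda>n. 1 / real n ^ k)"
    unfolding f_def using \<epsilon> by real_asymp
  ultimately show "(\<lambda>n. 2 * q n * sqrt (2 powr - h n)) \<in> o(\<lambda>n. 1 / real n ^ k)"
    by (rule landau_o.big_small_trans)
qed

theorem mainTheorem2:
  fixes \<epsilon> :: real
    and X :: "nat \<Rightarrow> nat pmf"
    and m :: "nat \<Rightarrow> nat"
    and A :: "nat \<Rightarrow> qadv"
  assumes eps: "\<epsilon> > 0"
    and X_supp: "\<And>lam. set_pmf (X lam) \<subseteq> {..<2 ^ lam}"
    and X_entropy: "\<forall>\<^sub>F lam in sequentially. min_entropy (X lam) > real lam powr \<epsilon>"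
    and m_poly: "poly_bounded m"
    and A_wf: "\<And>lam. wf_qadv lam (m lam) (A lam)"
    and A_queries: "poly_bounded (\<lambda>lam. qa_nq (A lam))"
  shows "\<exists>\<mu>. negligible \<mu> \<and>
           (\<forall>lam. pmf (distinguish (A lam) lam (m lam) (X lam)) True \<le> 1 / 2 + \<mu> lam)"
proof (intro exI conjI allI)
  txt \<open>The bound does not depend on the output length m.\<close>
  show "negligible (\<lambda>lam. 2 * qa_nq (A lam) * sqrt (2 powr - min_entropy (X lam)))"
    using negligible_query_bound[OF eps A_queries X_entropy] .
  show "pmf (distinguish (A lam) lam (m lam) (X lam)) True
      \<le> 1 / 2 + 2 * qa_nq (A lam) * sqrt (2 powr - min_entropy (X lam))" for lam
    by (rule pmf_distinguish_le[OF A_wf X_supp pmf_le_min_entropy])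
qed

end
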